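(* Assume $2c<\gamma<a-c$ and additionally $\gamma>\frac a2+c$. Then the unique maximizer $p^*_\gamma$ of $r_\gamma$ on $[0,a/b]$ (the unique zero of $r_\gamma'$ in $(0,a/b)$) equals $\frac{a}{2b}$. Moreover, let $\alpha,\beta\ge0$ and let $\hat a,\hat b$ be real numbers with $\hat b\ge b_{\min}$, $|\hat a-a|\le\alpha$, $|\hat b-b|\le\beta$ and $\frac{\hat a}{2\hat b}\in[0,a/b]$. Then $$r_\gamma\Bigl(\frac a{2b}\Bigr)-r_\gamma\Bigl(\frac{\hat a}{2\hat b}\Bigr)\le 2C_s\Bigl(\frac{a_{\max}^2\beta^2}{4b_{\min}^4}+\frac{\alpha^2}{4b_{\min}^2}\Bigr),$$ where $C_s:=\frac{2b+abL_F}{2}$.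
   Context: Let $a,b,c,L_F>0$ and constants $a_{\max},b_{\min}>0$ with $a\le a_{\max}$, $b\ge b_{\min}$. Let $N$ be a real random variable taking values in $[-c,c]$ with $\mathbb{E}[N]=0$, whose cumulative distribution function $F$ is $L_F$-Lipschitz. For an inventory level $\gamma$ and price $p\ge0$, the expected revenue is $r_\gamma(p):=p\cdot\mathbb{E}_N\bigl[\min\{\gamma,\,a-bp+N\}\bigr]$, and $r_\gamma'$ denotes its derivative in $p$. *)

theory Defs
  imports "HOL-Probability.Probability"
begin

text \<open>The noise N is represented by its distribution M, a probability measure on the reals.
  Expected revenue r_gamma(p) = p * E[min gamma (a - b p + N)].\<close>

definition revenue :: "real measure \<Rightarrow> real \<Rightarrow> real \<Rightarrow> real \<Rightarrow> real \<Rightarrow> real" where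
  "revenue M a b \<gamma> p = p * (\<integral>n. min \<gamma> (a - b * p + n) \<partial>M)"

definition cdf_of :: "real measure \<Rightarrow> real \<Rightarrow> real" where
  "cdf_of M x = measure M {..x}"

end

theory Submission imports Defs begin

text \<open>Writing \<open>\<Phi>(t) = E[(N - t)\<^sup>+]\<close> for the expected excess of the noise, the mean-zero
  assumption gives \<open>r\<^sub>\<gamma>(p) = p (a - b p) - p \<Phi>(\<gamma> - a + b p)\<close>. Since \<open>\<Phi>\<close> vanishes on \<open>[c, \<infinity>)\<close>,
  \<open>r\<^sub>\<gamma>\<close> coincides near \<open>a/(2b)\<close> with the riskless revenue \<open>p (a - b p)\<close>, whose vertex it is; for smaller
  prices \<open>r\<^sub>\<gamma>\<close> is strictly increasing, which rules out other stationary points. The Lipschitz cdf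
  gives \<open>1 - F(s) \<le> L\<^sub>F (c - s)\<close>, hence \<open>\<Phi>(t) = \<integral>\<^sub>t\<^sup>c (1 - F) \<le> L\<^sub>F (c - t)\<^sup>2 / 2\<close>, so the regret at a
  price \<open>p\<close> is at most \<open>C\<^sub>s (p - a/(2b))\<^sup>2\<close>; the plug-in price \<open>a_hat / (2 b_hat)\<close> is within
  \<open>\<alpha> / (2 b_min) + a_max \<beta> / (2 b_min\<^sup>2)\<close> of \<open>a/(2b)\<close>.\<close>

lemma quadratic_vertex_form:
  fixes a b p :: real
  assumes "b \<noteq> 0"
  shows "p * (a - b * p) = a\<^sup>2 / (4 * b) - b * (p - a / (2 * b))\<^sup>2"
  using assms by (simp add: field_simps power2_eq_square)

lemma has_real_derivative_ge_of_right_slope: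
  fixes f :: "real \<Rightarrow> real"
  assumes "(f has_real_derivative D) (at x)" and "\<delta> > 0"
    and "\<And>q. x < q \<Longrightarrow> q < x + \<delta> \<Longrightarrow> \<kappa> * (q - x) \<le> f q - f x"
  shows "\<kappa> \<le> D"
proof (rule tendsto_lowerbound)
  show "((\<lambda>q. (f q - f x) / (q - x)) \<longlongrightarrow> D) (at_right x)"
    using assms(1) by (simp add: has_field_derivative_iff filterlim_at_split)
  have "\<forall>\<^sub>F q in at_right x. q \<in> {x<..<x + \<delta>}"
    using assms(2) by (intro eventually_at_right_real) simp
  then show "\<forall>\<^sub>F q in at_right x. \<kappa> \<le> (f q - f x) / (q - x)"
    by eventually_elim (use assms(3) in \<open>auto simp: field_simps\<close>)
qed simp

lemma half_ratio_error_sq_le: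
  fixes a b a_hat b_hat \<alpha> \<beta> a_max b_min :: real
  assumes "b_min > 0" "b \<ge> b_min" "b_hat \<ge> b_min" "0 \<le> a" "a \<le> a_max"
    "\<bar>a_hat - a\<bar> \<le> \<alpha>" "\<bar>b_hat - b\<bar> \<le> \<beta>"
  shows "(a_hat / (2 * b_hat) - a / (2 * b))\<^sup>2
    \<le> 2 * (a_max\<^sup>2 * \<beta>\<^sup>2 / (4 * b_min ^ 4) + \<alpha>\<^sup>2 / (4 * b_min\<^sup>2))"
proof -
  define U where "U = \<alpha> / (2 * b_min)"
  define V where "V = a_max * \<beta> / (2 * b_min\<^sup>2)"
  have b_pos: "b > 0" "b_hat > 0" using assms by auto
  have split: "a_hat / (2 * b_hat) - a / (2 * b)
      = (a_hat - a) / (2 * b_hat) + a * (b - b_hat) / (2 * b * b_hat)"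
    using b_pos by (simp add: field_simps)
  have U: "\<bar>(a_hat - a) / (2 * b_hat)\<bar> \<le> U"
  proof -
    have "\<bar>(a_hat - a) / (2 * b_hat)\<bar> \<le> \<alpha> / (2 * b_hat)"
      using assms b_pos by (simp add: divide_right_mono)
    also have "\<dots> \<le> U"
      unfolding U_def using assms by (intro divide_left_mono) auto
    finally show ?thesis .
  qed
  have V: "\<bar>a * (b - b_hat) / (2 * b * b_hat)\<bar> \<le> V"
  proof -
    have "\<bar>a * (b - b_hat) / (2 * b * b_hat)\<bar> = a * \<bar>b_hat - b\<bar> / (2 * b * b_hat)"
      using b_pos assms by (simp add: abs_mult abs_minus_commute)
    also have "\<dots> \<le> a_max * \<beta> / (2 * b * b_hat)"
      using assms b_pos by (intro divide_right_mono mult_mono) auto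
    also have "\<dots> \<le> V"
      unfolding V_def using assms
      by (intro divide_left_mono mult_nonneg_nonneg)
         (auto simp: power2_eq_square intro: mult_mono order_trans[OF abs_ge_zero])
    finally show ?thesis .
  qed
  have "\<bar>a_hat / (2 * b_hat) - a / (2 * b)\<bar> \<le> U + V"
    unfolding split using abs_triangle_ineq U V by (rule order_trans[OF _ add_mono])
  then have "\<bar>a_hat / (2 * b_hat) - a / (2 * b)\<bar>\<^sup>2 \<le> (U + V)\<^sup>2"
    by (intro power_mono) auto
  then have "(a_hat / (2 * b_hat) - a / (2 * b))\<^sup>2 \<le> (U + V)\<^sup>2"
    by simp
  also have "\<dots> \<le> 2 * (U\<^sup>2 + V\<^sup>2)"
    using sum_squares_ge_zero[of "U - V" 0] by (simp add: power2_eq_square algebra_simps)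
  also have "U\<^sup>2 + V\<^sup>2 = a_max\<^sup>2 * \<beta>\<^sup>2 / (4 * b_min ^ 4) + \<alpha>\<^sup>2 / (4 * b_min\<^sup>2)"
    by (simp add: U_def V_def power_divide power_mult_distrib field_simps)
  finally show ?thesis .
qed

lemma min_demand_increment_ge:
  fixes a b g c p q n :: real
  assumes "0 \<le> p" "p \<le> q" "b > 0" "n \<le> c"
  shows "(q - p) * (min (a - b * (p + q)) (g - c) + n)
    \<le> q * min g (a - b * q + n) - p * min g (a - b * p + n)"
proof (cases "a - b * q + n < g")
  case True
  have "p * min g (a - b * p + n) \<le> p * (a - b * p + n)"
    using assms by (intro mult_left_mono) auto
  moreover have "(q - p) * (min (a - b * (p + q)) (g - c) + n) \<le> (q - p) * (a - b * (p + q) + n)"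
    using assms by (intro mult_left_mono) auto
  ultimately show ?thesis
    using True by (simp add: algebra_simps)
next
  case False
  moreover have "b * p \<le> b * q"
    using assms by simp
  ultimately have "min g (a - b * p + n) = g" "min g (a - b * q + n) = g"
    by auto
  moreover have "(q - p) * (min (a - b * (p + q)) (g - c) + n) \<le> (q - p) * g"
    using assms by (intro mult_left_mono) auto
  ultimately show ?thesis by (simp add: algebra_simps)
qed

locale bounded_noise = prob_space M for M :: "real measure" +
  fixes c :: real
  assumes sets_M: "sets M = sets borel" and supp: "AE n in M. n \<in> {-c..c}"
begin

lemma integrable_bounded:
  fixes f :: "real \<Rightarrow> real"
  assumes "f \<in> borel_measurable borel" and "\<And>n. n \<in> {-c..c} \<Longrightarrow> \<bar>f n\<bar> \<le> B"
  shows "integrable M f"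
proof (rule Bochner_Integration.integrable_bound)
  show "f \<in> borel_measurable M"
    using assms(1) measurable_cong_sets[OF sets_M refl] by blast
  show "AE n in M. norm (f n) \<le> norm B"
    using supp by eventually_elim (use assms(2) in force)
qed simp

lemma integrable_id: "integrable M (\<lambda>n. n)"
  by (rule integrable_bounded[where B = "\<bar>c\<bar>"]) auto

lemma integrable_min: "integrable M (\<lambda>n. min g (s + n))"
  by (rule integrable_bounded[where B = "\<bar>c\<bar> + \<bar>s\<bar> + \<bar>g\<bar>"]) auto

definition excess :: "real \<Rightarrow> real" where
  "excess t = (\<integral>n. max 0 (n - t) \<partial>M)"

lemma integrable_excess: "integrable M (\<lambda>n. max 0 (n - t))"
  by (rule integrable_bounded[where B = "\<bar>c\<bar> + \<bar>t\<bar>"]) auto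

lemma excess_nonneg: "excess t \<ge> 0"
  unfolding excess_def by (rule integral_nonneg_AE) auto

lemma excess_eq_0: "t \<ge> c \<Longrightarrow> excess t = 0"
  unfolding excess_def using supp by (subst integral_eq_zero_AE) auto

lemma prob_greaterThan: "prob {t<..} = 1 - cdf_of M t"
proof -
  have "{t<..} = space M - {..t}"
    using sets_eq_imp_space_eq[OF sets_M] by auto
  then show ?thesis
    using prob_compl[of "{..t}"] sets_M by (simp add: cdf_of_def)
qed

lemma cdf_of_bound_eq_1: "cdf_of M c = 1"
  unfolding cdf_of_def using supp sets_M
  by (subst prob_eq_1) (auto elim: AE_mp)

lemma excess_decrement_le:
  assumes "h \<ge> 0"
  shows "excess t - excess (t + h) \<le> h * (1 - cdf_of M t)"
proof -
  have "excess t - excess (t + h) = (\<integral>n. max 0 (n - t) - max 0 (n - (t + h)) \<partial>M)"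
    unfolding excess_def using integrable_excess by simp
  also have "\<dots> \<le> (\<integral>n. h * indicator {t<..} n \<partial>M)"
    using assms integrable_excess integrable_bounded[of "\<lambda>n. h * indicator {t<..} n" "\<bar>h\<bar>"]
    by (intro integral_mono) (auto simp: indicator_def)
  also have "\<dots> = h * prob {t<..}"
    using sets_M by simp
  finally show ?thesis
    by (simp add: prob_greaterThan)
qed

lemma one_minus_cdf_le_of_lipschitz:
  assumes "\<forall>x y. \<bar>cdf_of M x - cdf_of M y\<bar> \<le> L * \<bar>x - y\<bar>" and "s \<le> c"
  shows "1 - cdf_of M s \<le> L * (c - s)"
  using assms(1)[rule_format, of c s] assms(2) cdf_of_bound_eq_1 by simp

text \<open>A Riemann sum for \<open>\<integral>\<^sub>t\<^sup>c (1 - F)\<close> with \<open>m\<close> cells of width \<open>h = (c - t) / m\<close>.\<close>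

lemma excess_le_Riemann_sum:
  assumes tail: "\<And>s. s \<le> c \<Longrightarrow> 1 - cdf_of M s \<le> L * (c - s)"
    and "m > 0" and "t \<le> c"
  shows "excess t \<le> L * (c - t)\<^sup>2 / 2 * (real (Suc m) / real m)"
proof -
  define h where "h = (c - t) / real m"
  have h: "h \<ge> 0" "real m * h = c - t"
    using assms by (auto simp: h_def)
  define f where "f k = excess (t + real k * h)" for k
  have "excess t = (\<Sum>k<m. f k - f (Suc k))"
    using sum_lessThan_telescope'[of f m] excess_eq_0[of "t + real m * h"] h
    by (simp add: f_def)
  also have "\<dots> \<le> (\<Sum>k<m. h * (L * (c - t - real k * h)))"
  proof (rule sum_mono)
    fix k assume "k \<in> {..<m}"
    then have "real k * h \<le> c - t"
      using h mult_right_mono[of "real k" "real m" h] by simp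
    then have "f k - f (Suc k) \<le> h * (1 - cdf_of M (t + real k * h))"
      using excess_decrement_le[OF h(1), of "t + real k * h"]
      by (simp add: f_def algebra_simps)
    also have "\<dots> \<le> h * (L * (c - t - real k * h))"
      using tail[of "t + real k * h"] \<open>real k * h \<le> c - t\<close> h
      by (intro mult_left_mono) (auto simp: algebra_simps)
    finally show "f k - f (Suc k) \<le> h * (L * (c - t - real k * h))" .
  qed
  also have "\<dots> = (\<Sum>k<m. h * L * (c - t) - h * L * h * real k)"
    by (simp add: algebra_simps)
  also have "\<dots> = real m * (h * L * (c - t)) - h * L * h * (\<Sum>k<m. real k)"
    by (simp add: sum_subtractf sum_distrib_left)
  also have "\<dots> = h * L * (real m * (c - t) - h * (\<Sum>k<m. real k))"
    by (simp add: algebra_simps)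
  also have "(\<Sum>k<m. real k) = real m * (real m - 1) / 2"
    by (induction m) (auto simp: field_simps)
  also have "h * L * (real m * (c - t) - h * (real m * (real m - 1) / 2))
      = L * (c - t)\<^sup>2 / 2 * (real (Suc m) / real m)"
    using assms(2) by (simp add: h_def field_simps power2_eq_square)
  finally show ?thesis .
qed

lemma excess_le_quadratic:
  assumes "\<And>s. s \<le> c \<Longrightarrow> 1 - cdf_of M s \<le> L * (c - s)" and "t \<le> c"
  shows "excess t \<le> L * (c - t)\<^sup>2 / 2"
proof (rule tendsto_le[OF trivial_limit_sequentially])
  show "(\<lambda>m. L * (c - t)\<^sup>2 / 2 * (real (Suc m) / real m)) \<longlonglongrightarrow> L * (c - t)\<^sup>2 / 2"
    using tendsto_mult_left[OF LIMSEQ_Suc_n_over_n, of "L * (c - t)\<^sup>2 / 2"] by simp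
  show "\<forall>\<^sub>F m in sequentially. excess t \<le> L * (c - t)\<^sup>2 / 2 * (real (Suc m) / real m)"
    using eventually_gt_at_top[of 0] by eventually_elim (rule excess_le_Riemann_sum[OF assms(1) _ assms(2)])
qed simp

end

locale centered_noise = bounded_noise +
  assumes mean_zero: "(\<integral>n. n \<partial>M) = 0"
begin

lemma revenue_eq_excess: "revenue M a b g p = p * (a - b * p - excess (g - (a - b * p)))"
proof -
  have "(\<integral>n. min g (a - b * p + n) \<partial>M)
      = (\<integral>n. (a - b * p + n) - max 0 (n - (g - (a - b * p))) \<partial>M)"
    by (rule Bochner_Integration.integral_cong) auto
  also have "\<dots> = a - b * p - excess (g - (a - b * p))"
    unfolding excess_def using integrable_id integrable_excess mean_zero by (simp add: prob_space)
  finally show ?thesis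
    by (simp add: revenue_def)
qed

lemma revenue_eq_riskless: "b * p \<ge> a + c - g \<Longrightarrow> revenue M a b g p = p * (a - b * p)"
  by (simp add: revenue_eq_excess excess_eq_0)

lemma revenue_increment_ge:
  assumes "0 \<le> p" "p \<le> q" "b > 0"
  shows "(q - p) * min (a - b * (p + q)) (g - c) \<le> revenue M a b g q - revenue M a b g p"
proof -
  have "(q - p) * min (a - b * (p + q)) (g - c)
      = (\<integral>n. (q - p) * (min (a - b * (p + q)) (g - c) + n) \<partial>M)"
    using integrable_id mean_zero by (simp add: prob_space)
  also have "\<dots> \<le> (\<integral>n. q * min g (a - b * q + n) - p * min g (a - b * p + n) \<partial>M)"
    using integrable_id integrable_min supp
    by (intro integral_mono_AE) (auto elim!: AE_mp intro!: min_demand_increment_ge assms)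
  also have "\<dots> = revenue M a b g q - revenue M a b g p"
    unfolding revenue_def using integrable_min by simp
  finally show ?thesis .
qed

lemma revenue_has_derivative_riskless:
  assumes "b * p > a + c - g"
  shows "(revenue M a b g has_real_derivative a - 2 * b * p) (at p)"
proof (rule has_field_derivative_transform_within_open)
  show "((\<lambda>p. p * (a - b * p)) has_real_derivative a - 2 * b * p) (at p)"
    by (auto intro!: derivative_eq_intros simp: algebra_simps)
  show "open {p. b * p > a + c - g}"
    by (rule open_Collect_less) (auto intro!: continuous_intros)
qed (use assms revenue_eq_riskless in auto)

lemma revenue_regret_eq:
  assumes "b > 0" and "a / 2 + c \<le> g"
  shows "revenue M a b g (a / (2 * b)) - revenue M a b g p
    = b * (p - a / (2 * b))\<^sup>2 + p * excess (g - (a - b * p))"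
proof -
  have "revenue M a b g (a / (2 * b)) = a / (2 * b) * (a - b * (a / (2 * b)))"
    using assms by (intro revenue_eq_riskless) simp
  also have "\<dots> = a\<^sup>2 / (4 * b)"
    using assms(1) by (simp add: field_simps power2_eq_square)
  finally have "revenue M a b g (a / (2 * b)) = a\<^sup>2 / (4 * b)" .
  then show ?thesis
    unfolding revenue_eq_excess[of a b g p] using quadratic_vertex_form[where a = a and b = b and p = p] assms(1)
    by (simp add: algebra_simps)
qed

lemma revenue_vertex_unique_max:
  assumes "b > 0" and "a / 2 + c \<le> g" and "p \<ge> 0"
  shows "revenue M a b g p \<le> revenue M a b g (a / (2 * b))"
    and "revenue M a b g p = revenue M a b g (a / (2 * b)) \<Longrightarrow> p = a / (2 * b)"
proof -
  have sq: "0 \<le> b * (p - a / (2 * b))\<^sup>2" and "0 \<le> p * excess (g - (a - b * p))"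
    using assms excess_nonneg by auto
  note regret = revenue_regret_eq[OF assms(1,2), of p]
  then show "revenue M a b g p \<le> revenue M a b g (a / (2 * b))"
    using sq \<open>0 \<le> p * _\<close> by linarith
  assume "revenue M a b g p = revenue M a b g (a / (2 * b))"
  then have "b * (p - a / (2 * b))\<^sup>2 = 0"
    using regret sq \<open>0 \<le> p * _\<close> by linarith
  then show "p = a / (2 * b)"
    using assms(1) by simp
qed

lemma revenue_stationary_imp_vertex:
  assumes "b > 0" and "a / 2 + c < g" and "p \<ge> 0"
    and deriv: "(revenue M a b g has_real_derivative 0) (at p)"
  shows "p = a / (2 * b)"
proof (cases "b * p > a + c - g")
  case True
  then have "a - 2 * b * p = 0"
    using DERIV_unique[OF deriv revenue_has_derivative_riskless] by simp
  then show ?thesis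
    using assms(1) by (simp add: field_simps)
next
  case False
  define \<delta> where "\<delta> = (a - 2 * b * p) / (2 * b)"
  define \<kappa> where "\<kappa> = min ((a - 2 * b * p) / 2) (g - c)"
  have below: "b * p < a / 2"
    using False assms(2) by simp
  text \<open>Below the vertex the revenue rises with slope at least \<open>\<kappa>\<close>, so \<open>r'(p) \<ge> \<kappa> > 0\<close>.\<close>
  have "\<kappa> \<le> 0"
  proof (rule has_real_derivative_ge_of_right_slope[OF deriv])
    show "\<delta> > 0"
      using below assms(1) by (simp add: \<delta>_def)
    fix q assume q: "p < q" "q < p + \<delta>"
    then have "b * q < a / 2"
      using assms(1) by (simp add: \<delta>_def field_simps)
    then have "\<kappa> \<le> min (a - b * (p + q)) (g - c)"
      unfolding \<kappa>_def by (intro min.mono) (simp_all add: field_simps)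
    then have "\<kappa> * (q - p) \<le> (q - p) * min (a - b * (p + q)) (g - c)"
      using q by (simp add: mult.commute mult_left_mono)
    also have "\<dots> \<le> revenue M a b g q - revenue M a b g p"
      using q assms by (intro revenue_increment_ge) auto
    finally show "\<kappa> * (q - p) \<le> revenue M a b g q - revenue M a b g p" .
  qed
  moreover have "\<kappa> > 0"
  proof -
    have "0 \<le> b * p"
      using assms(1,3) by simp
    then show ?thesis
      using below assms(2) by (simp add: \<kappa>_def)
  qed
  ultimately show ?thesis by simp
qed

lemma revenue_regret_le:
  assumes tail: "\<And>s. s \<le> c \<Longrightarrow> 1 - cdf_of M s \<le> L * (c - s)" and "L \<ge> 0"
    and "b > 0" and "a / 2 + c \<le> g" and p: "0 \<le> p" "p \<le> a / b"
  shows "revenue M a b g (a / (2 * b)) - revenue M a b g p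
    \<le> (b + a * b * L / 2) * (p - a / (2 * b))\<^sup>2"
proof -
  define t where "t = g - (a - b * p)"
  have "0 \<le> a / b"
    using p by linarith
  then have "0 \<le> a"
    using assms(3) by (simp add: zero_le_divide_iff)
  have "p * excess t \<le> a * b * L / 2 * (p - a / (2 * b))\<^sup>2"
  proof (cases "t \<le> c")
    case True
    have "0 \<le> c - t" "c - t \<le> b * (a / (2 * b) - p)"
      using True assms(3,4) by (auto simp: t_def field_simps)
    then have "(c - t)\<^sup>2 \<le> (b * (a / (2 * b) - p))\<^sup>2"
      by (intro power_mono)
    also have "\<dots> = b\<^sup>2 * (p - a / (2 * b))\<^sup>2"
      by (simp add: power2_eq_square algebra_simps)
    finally have "(c - t)\<^sup>2 \<le> b\<^sup>2 * (p - a / (2 * b))\<^sup>2" .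
    then have "p * excess t \<le> (a / b) * (L * (b\<^sup>2 * (p - a / (2 * b))\<^sup>2) / 2)"
      using excess_le_quadratic[OF tail True] excess_nonneg[of t] p \<open>L \<ge> 0\<close>
      by (intro mult_mono) (auto intro: order_trans mult_left_mono divide_right_mono)
    also have "\<dots> = a * b * L / 2 * (p - a / (2 * b))\<^sup>2"
      using assms(3) by (simp add: power2_eq_square field_simps)
    finally show ?thesis .
  qed (use \<open>0 \<le> a\<close> assms(2,3) in \<open>simp add: excess_eq_0\<close>)
  then show ?thesis
    using revenue_regret_eq[OF assms(3,4), of p] by (simp add: t_def algebra_simps)
qed

lemma plug_in_revenue_regret_le:
  assumes tail: "\<And>s. s \<le> c \<Longrightarrow> 1 - cdf_of M s \<le> L * (c - s)" and "L \<ge> 0"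
    and "a / 2 + c \<le> g" and "0 \<le> a" "a \<le> a_max" and "b_min > 0" "b \<ge> b_min" "b_hat \<ge> b_min"
    and "\<bar>a_hat - a\<bar> \<le> \<alpha>" "\<bar>b_hat - b\<bar> \<le> \<beta>" and "a_hat / (2 * b_hat) \<in> {0..a / b}"
  shows "revenue M a b g (a / (2 * b)) - revenue M a b g (a_hat / (2 * b_hat))
    \<le> 2 * ((2 * b + a * b * L) / 2) * (a_max\<^sup>2 * \<beta>\<^sup>2 / (4 * b_min ^ 4) + \<alpha>\<^sup>2 / (4 * b_min\<^sup>2))"
proof -
  define E where "E = a_max\<^sup>2 * \<beta>\<^sup>2 / (4 * b_min ^ 4) + \<alpha>\<^sup>2 / (4 * b_min\<^sup>2)"
  have "b > 0"
    using assms(6,7) by simp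
  have "revenue M a b g (a / (2 * b)) - revenue M a b g (a_hat / (2 * b_hat))
      \<le> (b + a * b * L / 2) * (a_hat / (2 * b_hat) - a / (2 * b))\<^sup>2"
    using assms \<open>b > 0\<close> by (intro revenue_regret_le[OF tail]) auto
  also have "\<dots> \<le> (b + a * b * L / 2) * (2 * E)"
    unfolding E_def using assms \<open>b > 0\<close> by (intro mult_left_mono half_ratio_error_sq_le) auto
  also have "\<dots> = 2 * ((2 * b + a * b * L) / 2) * E"
    by (simp add: algebra_simps)
  finally show ?thesis
    unfolding E_def .
qed

end

theorem mainTheorem4:
  fixes M :: "real measure"
    and a b c L_F a_max b_min \<gamma> :: real
  assumes a_pos: "a > 0" and b_pos: "b > 0" and c_pos: "c > 0" and LF_pos: "L_F > 0"
    and amax_pos: "a_max > 0" and bmin_pos: "b_min > 0"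
    and a_le: "a \<le> a_max" and b_ge: "b \<ge> b_min"
    and prob: "prob_space M" and sets_M: "sets M = sets borel"
    and supp: "AE n in M. n \<in> {-c..c}"
    and mean0: "integrable M (\<lambda>n. n)" "(\<integral>n. n \<partial>M) = 0"
    and lip: "\<forall>x y. \<bar>cdf_of M x - cdf_of M y\<bar> \<le> L_F * \<bar>x - y\<bar>"
    and g1: "2 * c < \<gamma>" and g2: "\<gamma> < a - c" and g3: "\<gamma> > a / 2 + c"
  shows "a / (2 * b) \<in> {0..a / b}
    \<and> (\<forall>p \<in> {0..a / b}. revenue M a b \<gamma> p \<le> revenue M a b \<gamma> (a / (2 * b)))
    \<and> (\<forall>p \<in> {0..a / b}. revenue M a b \<gamma> p = revenue M a b \<gamma> (a / (2 * b)) \<longrightarrow> p = a / (2 * b))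
    \<and> ((revenue M a b \<gamma>) has_real_derivative 0) (at (a / (2 * b)))
    \<and> (\<forall>p \<in> {0<..<a / b}. ((revenue M a b \<gamma>) has_real_derivative 0) (at p) \<longrightarrow> p = a / (2 * b))
    \<and> (\<forall>\<alpha> \<beta> a_hat b_hat :: real.
         \<alpha> \<ge> 0 \<and> \<beta> \<ge> 0 \<and> b_hat \<ge> b_min \<and> \<bar>a_hat - a\<bar> \<le> \<alpha> \<and> \<bar>b_hat - b\<bar> \<le> \<beta>
         \<and> a_hat / (2 * b_hat) \<in> {0..a / b} \<longrightarrow>
         revenue M a b \<gamma> (a / (2 * b)) - revenue M a b \<gamma> (a_hat / (2 * b_hat))
           \<le> 2 * ((2 * b + a * b * L_F) / 2)
               * (a_max\<^sup>2 * \<beta>\<^sup>2 / (4 * b_min ^ 4) + \<alpha>\<^sup>2 / (4 * b_min\<^sup>2)))"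
proof -
  interpret centered_noise M c
    using prob sets_M supp mean0(2)
    by (intro centered_noise.intro bounded_noise.intro bounded_noise_axioms.intro
        centered_noise_axioms.intro)
  let ?r = "revenue M a b \<gamma>" and ?p = "a / (2 * b)"
  have tail: "\<And>s. s \<le> c \<Longrightarrow> 1 - cdf_of M s \<le> L_F * (c - s)"
    by (rule one_minus_cdf_le_of_lipschitz[OF lip])
  show ?thesis
  proof (intro conjI ballI allI impI)
    show "?p \<in> {0..a / b}"
      using a_pos b_pos by (simp add: field_simps)
  next
    fix p assume "p \<in> {0..a / b}"
    then show "?r p \<le> ?r ?p" and "?r p = ?r ?p \<Longrightarrow> p = ?p"
      using revenue_vertex_unique_max[where a = a and b = b and g = \<gamma> and p = p] b_pos g3 by auto
  next
    show "(?r has_real_derivative 0) (at ?p)"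
      using revenue_has_derivative_riskless[where a = a and b = b and g = \<gamma> and p = ?p] g3 b_pos by simp
  next
    fix p assume "p \<in> {0<..<a / b}" and "(?r has_real_derivative 0) (at p)"
    then show "p = ?p"
      using revenue_stationary_imp_vertex[where a = a and b = b and g = \<gamma> and p = p] b_pos g3 by auto
  next
    fix \<alpha> \<beta> a_hat b_hat :: real
    assume "\<alpha> \<ge> 0 \<and> \<beta> \<ge> 0 \<and> b_hat \<ge> b_min \<and> \<bar>a_hat - a\<bar> \<le> \<alpha> \<and> \<bar>b_hat - b\<bar> \<le> \<beta>
      \<and> a_hat / (2 * b_hat) \<in> {0..a / b}"
    then show "?r ?p - ?r (a_hat / (2 * b_hat))
      \<le> 2 * ((2 * b + a * b * L_F) / 2) * (a_max\<^sup>2 * \<beta>\<^sup>2 / (4 * b_min ^ 4) + \<alpha>\<^sup>2 / (4 * b_min\<^sup>2))"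
      using LF_pos g3 a_pos a_le bmin_pos b_ge
      by (intro plug_in_revenue_regret_le[OF tail]) auto
  qed
qed

end
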